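(* Let $\mathcal V,\mathcal W$ be complex topological vector spaces and let $\mathcal D\subseteq\mathcal V_{\rm nc}$, $\mathcal E\subseteq\mathcal W_{\rm nc}$ be noncommutative sets. Let $f\colon\mathcal D\to\mathcal E$ be a function such that (a) $f(a)\in\mathcal E_n$ for every $a\in\mathcal D_n$; (b) $f(a\oplus c)=f(a)\oplus f(c)$ for all $a\in\mathcal D_n,c\in\mathcal D_m$; (c) whenever $a\in\mathcal D_n,c\in\mathcal D_m,b\in\mathcal V^{n\times m}$ are such that $\begin{bmatrix}a&b\\0&c\end{bmatrix}\in\mathcal D_{n+m}$, there is an element $\Delta f(a,c)(b)\in\mathcal W^{n\times m}$, with $\Delta f(a,c)(tb)=t\Delta f(a,c)(b)$ for all $t\in[0,+\infty)$ for which $tb$ is in the domain of $\Delta f(a,c)(\cdot)$, such that $f\Big(\begin{bmatrix}a&b\\0&c\end{bmatrix}\Big)=\begin{bmatrix}f(a)&\Delta f(a,c)(b)\\0&f(c)\end{bmatrix}$. Then $\delta_{\mathcal D}(a,c)(b)\ge\delta_{\mathcal E}(f(a),f(c))(\Delta f(a,c)(b))$ for all $a\in\mathcal D_n$, $c\in\mathcal D_m$, $b\in\mathcal V^{n\times m}$.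
   Context: $\mathcal V^{n\times m}$ denotes $n\times m$ matrices over $\mathcal V$ with the product topology, $\mathcal V_{\rm nc}=\coprod_n\mathcal V^{n\times n}$. A noncommutative set is a family $\mathcal D=(\mathcal D_n)_{n\ge1}$ with $\mathcal D_n\subseteq\mathcal V^{n\times n}$ and $a\oplus c=\begin{bmatrix}a&0\\0&c\end{bmatrix}\in\mathcal D_{n+m}$ whenever $a\in\mathcal D_n,c\in\mathcal D_m$. For $a\in\mathcal D_n,c\in\mathcal D_m,b\in\mathcal V^{n\times m}$, $\delta_{\mathcal D}(a,c)(b)=\big[\sup\{t\in[0,+\infty]\colon\begin{bmatrix}a&sb\\0&c\end{bmatrix}\in\mathcal D_{n+m}\ \forall s\in[0,t]\}\big]^{-1}\in[0,+\infty]$, with $1/0=+\infty$ and $1/(+\infty)=0$; $\delta_{\mathcal D}(a,c)(sb)=s\,\delta_{\mathcal D}(a,c)(b)$ for $s>0$. Convention: if $\begin{bmatrix}a&sb\\0&c\end{bmatrix}\in\mathcal D_{n+m}$ only for small $s>0$, $\Delta f(a,c)(b)$ is defined by homogeneity as $s^{-1}\Delta f(a,c)(sb)$. *)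

theory Defs
  imports Complex_Main "Jordan_Normal_Form.Matrix" "HOL-Library.Extended_Nonnegative_Real"
begin

definition complex_tvs :: "(complex \<Rightarrow> 'v::{real_vector,topological_space} \<Rightarrow> 'v) \<Rightarrow> bool" where
  "complex_tvs sc \<longleftrightarrow>
     (\<forall>z x y. sc z (x + y) = sc z x + sc z y) \<and>
     (\<forall>z w x. sc (z + w) x = sc z x + sc w x) \<and>
     (\<forall>z w x. sc (z * w) x = sc z (sc w x)) \<and>
     (\<forall>r x. sc (complex_of_real r) x = r *\<^sub>R x) \<and>
     continuous_on UNIV (\<lambda>p::'v \<times> 'v. fst p + snd p) \<and>
     continuous_on UNIV (\<lambda>p::complex \<times> 'v. sc (fst p) (snd p))"

text \<open>Matrices over a vector space V of varying sizes are represented by the type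
  'v mat of Jordan_Normal_Form. A noncommutative set is a set of square matrices of
  positive size (D_n = the members of size n) closed under direct sums.\<close>

definition dsum :: "'v::zero mat \<Rightarrow> 'v mat \<Rightarrow> 'v mat" where
  "dsum a c = four_block_mat a (0\<^sub>m (dim_row a) (dim_col c)) (0\<^sub>m (dim_row c) (dim_col a)) c"

definition utblock :: "'v::zero mat \<Rightarrow> 'v mat \<Rightarrow> 'v mat \<Rightarrow> 'v mat" where
  "utblock a b c = four_block_mat a b (0\<^sub>m (dim_row c) (dim_col a)) c"

definition nc_set :: "'v::zero mat set \<Rightarrow> bool" where
  "nc_set D \<longleftrightarrow> (\<forall>a\<in>D. \<exists>n\<ge>1. a \<in> carrier_mat n n) \<and>
                 (\<forall>a\<in>D. \<forall>c\<in>D. dsum a c \<in> D)"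

definition scaleR_mat :: "real \<Rightarrow> 'v::real_vector mat \<Rightarrow> 'v mat" where
  "scaleR_mat s b = map_mat (scaleR s) b"

text \<open>delta_D(a,c)(b) = [sup{t in [0,+inf] . all s in [0,t]: [a sb; 0 c] in D}]^{-1},
  with 1/0 = +inf and 1/(+inf) = 0 (the inverse on ennreal).\<close>
definition nc_delta :: "'v::real_vector mat set \<Rightarrow> 'v mat \<Rightarrow> 'v mat \<Rightarrow> 'v mat \<Rightarrow> ennreal" where
  "nc_delta D a c b = inverse (Sup {t::ennreal. \<forall>s::real. 0 \<le> s \<and> ennreal s \<le> t \<longrightarrow>
                                       utblock a (scaleR_mat s b) c \<in> D})"

text \<open>Extension of Delta f(a,c)(.) by homogeneity (the paper's convention): if
  [a b; 0 c] is not in D but [a sb; 0 c] is for some s > 0, then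
  Delta f(a,c)(b) = s^{-1} Delta f(a,c)(sb). (If no such s exists the value is
  immaterial, delta_D(a,c)(b) being +inf.)\<close>
definition ext_Delta :: "'v::real_vector mat set \<Rightarrow> ('v mat \<Rightarrow> 'v mat \<Rightarrow> 'v mat \<Rightarrow> 'w::real_vector mat)
    \<Rightarrow> 'v mat \<Rightarrow> 'v mat \<Rightarrow> 'v mat \<Rightarrow> 'w mat" where
  "ext_Delta D Df a c b =
     (if utblock a b c \<in> D then Df a c b
      else (let s = (SOME s::real. 0 < s \<and> utblock a (scaleR_mat s b) c \<in> D)
            in scaleR_mat (1 / s) (Df a c (scaleR_mat s b))))"

end

theory Submission
  imports Defs
begin

text \<open>A homomorphism of noncommutative sets sends every admissible upper triangular block
  [a sb; 0 c] of D to [f(a) s\<Delta>; 0 f(c)] with \<Delta> = \<Delta>f(a,c)(b), by positive homogeneity of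
  \<Delta>f(a,c). Hence every positive t with [a sb; 0 c] \<in> D for all s \<in> [0,t] has the same
  property for E, f(a), f(c), \<Delta>; the supremum defining \<delta>(D) can only grow, and its
  inverse shrink.\<close>

lemma dim_scaleR_mat [simp]:
  "dim_row (scaleR_mat s b) = dim_row b" "dim_col (scaleR_mat s b) = dim_col b"
  by (simp_all add: scaleR_mat_def)

lemma scaleR_mat_carrier_mat: "b \<in> carrier_mat n m \<Longrightarrow> scaleR_mat s b \<in> carrier_mat n m"
  by (auto simp: scaleR_mat_def)

lemma scaleR_mat_scaleR_mat: "scaleR_mat s (scaleR_mat r b) = scaleR_mat (s * r) b"
  by (rule eq_matI) (auto simp: scaleR_mat_def)

lemma scaleR_mat_one [simp]: "scaleR_mat 1 b = b"
  by (rule eq_matI) (auto simp: scaleR_mat_def)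

lemma inverse_ennreal_antimono: "(x::ennreal) \<le> y \<Longrightarrow> inverse y \<le> inverse x"
  by (simp add: ereal_inverse_antimono inverse_ennreal.rep_eq less_eq_ennreal.rep_eq)

lemma ennreal_pos_ge_real: "0 < (t::ennreal) \<Longrightarrow> \<exists>r>0. ennreal r \<le> t"
  by (metis enn2real_positive_iff ennreal_enn2real ennreal_le_epsilon gt_ex order_refl)

definition nc_radii :: "'v::real_vector mat set \<Rightarrow> 'v mat \<Rightarrow> 'v mat \<Rightarrow> 'v mat \<Rightarrow> ennreal set" where
  "nc_radii D a c b = {t. \<forall>s::real. 0 \<le> s \<and> ennreal s \<le> t \<longrightarrow> utblock a (scaleR_mat s b) c \<in> D}"

lemma nc_delta_eq_inverse_Sup: "nc_delta D a c b = inverse (Sup (nc_radii D a c b))"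
  by (simp add: nc_delta_def nc_radii_def)

lemma nc_radii_pos_witness:
  assumes "t \<in> nc_radii D a c b" and "0 < t"
  obtains r where "0 < r" and "utblock a (scaleR_mat r b) c \<in> D"
  using assms ennreal_pos_ge_real[of t] by (fastforce simp: nc_radii_def)

text \<open>Only positive radii need to be transferred: t = 0 lies below every supremum anyway, and
  for it ext_Delta may be a junk value, since no positive scaling of b need be admissible.\<close>

lemma nc_delta_antimono:
  assumes "\<And>t. t \<in> nc_radii D a c b \<Longrightarrow> 0 < t \<Longrightarrow> t \<in> nc_radii E a' c' b'"
  shows "nc_delta E a' c' b' \<le> nc_delta D a c b"
  unfolding nc_delta_eq_inverse_Sup
proof (rule inverse_ennreal_antimono, rule Sup_least)
  fix t assume "t \<in> nc_radii D a c b"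
  with assms show "t \<le> Sup (nc_radii E a' c' b')"
    by (cases "t = 0") (auto simp: zero_less_iff_neq_zero intro: Sup_upper)
qed

lemma ext_Delta_rescaled:
  assumes "0 < r" and "utblock a (scaleR_mat r b) c \<in> D"
  obtains s0 where "0 < s0" and "utblock a (scaleR_mat s0 b) c \<in> D"
    and "ext_Delta D Df a c b = scaleR_mat (1 / s0) (Df a c (scaleR_mat s0 b))"
proof (cases "utblock a b c \<in> D")
  case True
  with that[of 1] show ?thesis by (simp add: ext_Delta_def)
next
  case False
  define s0 where "s0 = (SOME s::real. 0 < s \<and> utblock a (scaleR_mat s b) c \<in> D)"
  have "0 < s0 \<and> utblock a (scaleR_mat s0 b) c \<in> D"
    unfolding s0_def by (rule someI_ex) (use assms in blast)
  moreover have "ext_Delta D Df a c b = scaleR_mat (1 / s0) (Df a c (scaleR_mat s0 b))"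
    using False unfolding ext_Delta_def s0_def[symmetric] Let_def by simp
  ultimately show ?thesis using that by blast
qed

lemma ext_Delta_homogeneous:
  assumes hom: "\<And>b t. b \<in> carrier_mat (dim_row a) (dim_col c) \<Longrightarrow> utblock a b c \<in> D \<Longrightarrow>
      0 \<le> t \<Longrightarrow> utblock a (scaleR_mat t b) c \<in> D \<Longrightarrow>
      Df a c (scaleR_mat t b) = scaleR_mat t (Df a c b)"
    and b: "b \<in> carrier_mat (dim_row a) (dim_col c)"
    and r: "0 < r" "utblock a (scaleR_mat r b) c \<in> D"
    and s: "0 \<le> s" "utblock a (scaleR_mat s b) c \<in> D"
  shows "scaleR_mat s (ext_Delta D Df a c b) = Df a c (scaleR_mat s b)"
proof -
  obtain s0 where s0: "0 < s0" "utblock a (scaleR_mat s0 b) c \<in> D"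
    and Del: "ext_Delta D Df a c b = scaleR_mat (1 / s0) (Df a c (scaleR_mat s0 b))"
    using ext_Delta_rescaled[OF r] by blast
  have s_b: "scaleR_mat (s / s0) (scaleR_mat s0 b) = scaleR_mat s b"
    using s0 by (simp add: scaleR_mat_scaleR_mat)
  have "scaleR_mat s (ext_Delta D Df a c b) = scaleR_mat (s / s0) (Df a c (scaleR_mat s0 b))"
    by (simp add: Del scaleR_mat_scaleR_mat)
  also have "\<dots> = Df a c (scaleR_mat s b)"
    using hom[OF scaleR_mat_carrier_mat[OF b] s0(2), of "s / s0"] s s0 s_b by simp
  finally show ?thesis .
qed

lemma nc_radii_utblock_image:
  assumes hom: "\<And>b t. b \<in> carrier_mat (dim_row a) (dim_col c) \<Longrightarrow> utblock a b c \<in> D \<Longrightarrow>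
      0 \<le> t \<Longrightarrow> utblock a (scaleR_mat t b) c \<in> D \<Longrightarrow>
      Df a c (scaleR_mat t b) = scaleR_mat t (Df a c b)"
    and f_utblock: "\<And>b. b \<in> carrier_mat (dim_row a) (dim_col c) \<Longrightarrow> utblock a b c \<in> D \<Longrightarrow>
      f (utblock a b c) = utblock (f a) (Df a c b) (f c)"
    and f_into: "\<And>x. x \<in> D \<Longrightarrow> f x \<in> E"
    and b: "b \<in> carrier_mat (dim_row a) (dim_col c)"
    and t: "t \<in> nc_radii D a c b" "0 < t"
  shows "t \<in> nc_radii E (f a) (f c) (ext_Delta D Df a c b)"
  unfolding nc_radii_def
proof (intro CollectI allI impI)
  obtain r where r: "0 < r" "utblock a (scaleR_mat r b) c \<in> D"
    using t by (rule nc_radii_pos_witness)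
  fix s :: real assume "0 \<le> s \<and> ennreal s \<le> t"
  with t(1) have s: "0 \<le> s" "utblock a (scaleR_mat s b) c \<in> D"
    by (simp_all add: nc_radii_def)
  have "scaleR_mat s (ext_Delta D Df a c b) = Df a c (scaleR_mat s b)"
    by (rule ext_Delta_homogeneous[OF _ b r s]) (fact hom)
  then have "utblock (f a) (scaleR_mat s (ext_Delta D Df a c b)) (f c) = f (utblock a (scaleR_mat s b) c)"
    using f_utblock[OF scaleR_mat_carrier_mat[OF b] s(2)] by simp
  with f_into[OF s(2)] show "utblock (f a) (scaleR_mat s (ext_Delta D Df a c b)) (f c) \<in> E"
    by simp
qed

theorem proposition3p1:
  fixes D :: "'v::{real_vector,topological_space} mat set"
    and E :: "'w::{real_vector,topological_space} mat set"
    and f :: "'v mat \<Rightarrow> 'w mat"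
    and Df :: "'v mat \<Rightarrow> 'v mat \<Rightarrow> 'v mat \<Rightarrow> 'w mat"
    and scV :: "complex \<Rightarrow> 'v \<Rightarrow> 'v" and scW :: "complex \<Rightarrow> 'w \<Rightarrow> 'w"
  assumes "complex_tvs scV" and "complex_tvs scW"
    and "nc_set D" and "nc_set E"
    and fa: "\<forall>a\<in>D. f a \<in> E \<and> dim_row (f a) = dim_row a \<and> dim_col (f a) = dim_col a"
    and fb: "\<forall>a\<in>D. \<forall>c\<in>D. f (dsum a c) = dsum (f a) (f c)"
    and fc: "\<forall>a\<in>D. \<forall>c\<in>D. \<forall>b\<in>carrier_mat (dim_row a) (dim_col c).
               utblock a b c \<in> D \<longrightarrow>
                 Df a c b \<in> carrier_mat (dim_row a) (dim_col c) \<and>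
                 (\<forall>t::real. 0 \<le> t \<and> utblock a (scaleR_mat t b) c \<in> D \<longrightarrow>
                     Df a c (scaleR_mat t b) = scaleR_mat t (Df a c b)) \<and>
                 f (utblock a b c) = utblock (f a) (Df a c b) (f c)"
  shows "\<forall>a\<in>D. \<forall>c\<in>D. \<forall>b\<in>carrier_mat (dim_row a) (dim_col c).
           nc_delta D a c b \<ge> nc_delta E (f a) (f c) (ext_Delta D Df a c b)"
proof (intro ballI)
  fix a c b :: "'v mat"
  assume a: "a \<in> D" and c: "c \<in> D" and b: "b \<in> carrier_mat (dim_row a) (dim_col c)"
  have hom: "Df a c (scaleR_mat t b') = scaleR_mat t (Df a c b')"
    if "b' \<in> carrier_mat (dim_row a) (dim_col c)" "utblock a b' c \<in> D"
      "0 \<le> t" "utblock a (scaleR_mat t b') c \<in> D" for b' t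
    using fc a c that by blast
  have f_utblock: "f (utblock a b' c) = utblock (f a) (Df a c b') (f c)"
    if "b' \<in> carrier_mat (dim_row a) (dim_col c)" "utblock a b' c \<in> D" for b'
    using fc a c that by blast
  have f_into: "f x \<in> E" if "x \<in> D" for x
    using fa that by blast
  show "nc_delta E (f a) (f c) (ext_Delta D Df a c b) \<le> nc_delta D a c b"
    by (rule nc_delta_antimono)
      (rule nc_radii_utblock_image[where f = f and Df = Df, OF hom f_utblock f_into b])
qed

end
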